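(* Let Assumptions A1 and A2 hold (see context) and let $\kappa = L/\mu > 1$. Run Algorithm PBA with $\alpha = \frac{1}{L}$, $\eta = \frac{\sqrt{\kappa}-1}{\sqrt{\kappa}+1}$, stepsize $0<\beta \le \frac{1}{2}(L_\Phi + \Gamma + \kappa^2)^{-1}$, and number of inner iterations $T \ge \frac{\ln(8(1+\kappa))}{\ln\big((1-\kappa^{-1/2})^{-1}\big)}$ (so $T = \mathcal{O}(\sqrt{\kappa}\ln\kappa)$). Define the potential function $$H(x,y') := \Phi(x) + h(x) + \tfrac{7}{8}\,\|y^T(x,y') - y^*(x)\|^2 .$$ Then the iterates $\{(x_k,y_k)\}_k$ satisfy, for all $k$, $$H(x_{k+1},y_{k+1}) \le H(x_k,y_k) - \frac{1}{4\beta}\|x_{k+1}-x_k\|^2 - \frac{1}{8}\Big(\|y_{k+1}-y^*(x_k)\|^2 + \|y_{k+2}-y^*(x_{k+1})\|^2\Big).$$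
   Context: Problem: $\min_{x\in\mathbb{R}^d} \Phi(x)+h(x)$ where $\Phi(x) := f(x,y^*(x))$ and $y^*(x) := \arg\min_{y\in\mathbb{R}^p} g(x,y)$, with $f,g:\mathbb{R}^d\times\mathbb{R}^p\to\mathbb{R}$ jointly continuously differentiable. Write $z=(x,y)$. Assumption A1: (1) $g(x,\cdot)$ is $\mu$-strongly convex for every $x$ ($\Phi$ may be nonconvex); (2) $h:\mathbb{R}^d\to\mathbb{R}\cup\{+\infty\}$ is proper and lower-semicontinuous (possibly nonsmooth and nonconvex); (3) $\Phi+h$ is bounded below and has bounded sub-level sets. Assumption A2: (1) $f$ is $M$-Lipschitz, and $\nabla f$ and $\nabla g$ are $L$-Lipschitz (in $z$); (2) the Jacobian $\nabla_x\nabla_y g$ is $\tau$-Lipschitz and the Hessian $\nabla_y^2 g$ is $\rho$-Lipschitz (in $z$). Set $\kappa = L/\mu$, $L_\Phi = L + \frac{2L^2+\tau M^2}{\mu} + \frac{\rho L M + L^3 + \tau M L}{\mu^2} + \frac{\rho L^2 M}{\mu^3}$, and $\Gamma = 3L^2 + \frac{3\tau^2M^2}{\mu^2} + 6L^2(1+\sqrt{\kappa})^2\big(\kappa + \frac{\rho M}{\mu^2}\big)^2$. Proximal map: $\mathrm{prox}_{\beta h}(v) := \arg\min_u \{\beta h(u) + \frac12\|u-v\|^2\}$ (possibly set-valued). Algorithm PBA (proximal BiO-AIDm) with parameters $\alpha,\beta,\eta>0$, $T\in\mathbb{N}$, initial $x_0,y_0$: for $k=0,1,2,\dots$: set $y^0(x_k,y_k)=u_0=y_k$;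 for $t=1,\dots,T$: $u_t = y^{t-1}(x_k,y_k) - \alpha\nabla_y g(x_k, y^{t-1}(x_k,y_k))$, $y^t(x_k,y_k) = u_t + \eta(u_t - u_{t-1})$; set $y_{k+1} = y^T(x_k,y_k)$; compute $\widehat\nabla\Phi(x_k) = \nabla_x f(x_k,y_{k+1}) - \nabla_x\nabla_y g(x_k,y_{k+1})\hat v_k$ where $\hat v_k$ is the exact solution of $\nabla_y^2 g(x_k,y_{k+1})v = \nabla_y f(x_k,y_{k+1})$; update $x_{k+1}\in \mathrm{prox}_{\beta h}(x_k - \beta\widehat\nabla\Phi(x_k))$. For general $(x,y')$, $y^T(x,y')$ denotes the output of the same $T$-step inner loop applied to $g(x,\cdot)$ with initial point $y'$. *)

theory Defs
  imports "HOL-Analysis.Analysis" "HOL-Library.Extended_Real"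
begin

definition strongly_convex :: "real \<Rightarrow> ('b::real_inner \<Rightarrow> real) \<Rightarrow> bool" where
  "strongly_convex \<mu> \<phi> \<longleftrightarrow>
     (\<forall>y y' t. 0 \<le> t \<and> t \<le> 1 \<longrightarrow>
        \<phi> (t *\<^sub>R y + (1 - t) *\<^sub>R y') \<le> t * \<phi> y + (1 - t) * \<phi> y'
            - \<mu> / 2 * t * (1 - t) * (norm (y - y'))\<^sup>2)"

definition lower_semicontinuous :: "('a::topological_space \<Rightarrow> ereal) \<Rightarrow> bool" where
  "lower_semicontinuous h \<longleftrightarrow> (\<forall>x. h x \<le> Liminf (at x) h)"

text \<open>Lower-level solution y*(x) = argmin_y g(x,y) (unique under strong convexity).\<close>
definition ystar :: "('a \<Rightarrow> 'b \<Rightarrow> real) \<Rightarrow> 'a \<Rightarrow> 'b" where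
  "ystar g x = (THE y. \<forall>y'. g x y \<le> g x y')"

definition Phi :: "('a \<Rightarrow> 'b \<Rightarrow> real) \<Rightarrow> ('a \<Rightarrow> 'b \<Rightarrow> real) \<Rightarrow> 'a \<Rightarrow> real" where
  "Phi f g x = f x (ystar g x)"

definition prox :: "real \<Rightarrow> ('a::real_normed_vector \<Rightarrow> ereal) \<Rightarrow> 'a \<Rightarrow> 'a set" where
  "prox \<beta> h v = {u. \<forall>w. ereal \<beta> * h u + ereal ((norm (u - v))\<^sup>2 / 2)
                         \<le> ereal \<beta> * h w + ereal ((norm (w - v))\<^sup>2 / 2)}"

text \<open>State (u_t, y^t) of the T-step accelerated inner loop on g(x,.) started at y'
  (u_0 = y^0 = y'); gy is the partial gradient nabla_y g.\<close>
fun inner_state :: "('a \<Rightarrow> 'b \<Rightarrow> 'b::real_vector) \<Rightarrow> real \<Rightarrow> real \<Rightarrow> 'a \<Rightarrow> 'b \<Rightarrow> nat \<Rightarrow> 'b \<times> 'b" where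
  "inner_state gy \<alpha> \<eta> x y' 0 = (y', y')"
| "inner_state gy \<alpha> \<eta> x y' (Suc t) =
     (let (uprev, yprev) = inner_state gy \<alpha> \<eta> x y' t;
          u = yprev - \<alpha> *\<^sub>R gy x yprev
      in (u, u + \<eta> *\<^sub>R (u - uprev)))"

definition yT :: "('a \<Rightarrow> 'b \<Rightarrow> 'b::real_vector) \<Rightarrow> real \<Rightarrow> real \<Rightarrow> nat \<Rightarrow> 'a \<Rightarrow> 'b \<Rightarrow> 'b" where
  "yT gy \<alpha> \<eta> T x y' = snd (inner_state gy \<alpha> \<eta> x y' T)"

end

theory Submission
  imports Defs
begin

text \<open>
  Let \<open>G\<close> be the approximate hypergradient, \<open>\<delta> = \<parallel>y(k+1) - y*(x k)\<parallel>\<close> and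
  \<open>D = \<parallel>x(k+1) - x k\<parallel>\<close>.  The proximal step gives
  \<open>h(x(k+1)) + G\<bullet>(x(k+1) - x k) + D\<^sup>2/(2\<beta>) \<le> h(x k)\<close>.  Smoothness of \<open>f\<close>, Lipschitz continuity
  of \<open>y*\<close> and a second-order expansion of \<open>\<nabla>\<^sub>y g\<close> between the lower-level solutions \<open>y*(x k)\<close>
  and \<open>y*(x(k+1))\<close>, where \<open>\<nabla>\<^sub>y g\<close> vanishes, give
  \<open>\<Phi>(x(k+1)) - \<Phi>(x k) \<le> G\<bullet>(x(k+1) - x k) + E \<delta> D + C D\<^sup>2\<close>.  Nesterov's method, analysed
  with the estimate-sequence Lyapunov function, contracts the squared distance to \<open>y*\<close> by
  \<open>(1 + \<kappa>)(1 - 1/sqrt \<kappa>)\<^sup>T \<le> 1/8\<close>, so the warm-started inner error at the next step is at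
  most \<open>\<delta>\<^sup>2/4 + \<kappa>\<^sup>2 D\<^sup>2/4\<close>.  After Young's inequality on \<open>E \<delta> D\<close>, the step size condition
  lets \<open>D\<^sup>2/(4\<beta>)\<close> absorb every term quadratic in \<open>D\<close>.
\<close>

lemma DERIV_increment_le_quadratic:
  fixes \<phi> \<phi>' :: "real \<Rightarrow> real"
  assumes deriv: "\<And>t. 0 \<le> t \<Longrightarrow> t \<le> 1 \<Longrightarrow> (\<phi> has_real_derivative \<phi>' t) (at t)"
    and growth: "\<And>t. 0 \<le> t \<Longrightarrow> t \<le> 1 \<Longrightarrow> \<phi>' t - \<phi>' 0 \<le> c * t"
  shows "\<phi> 1 - \<phi> 0 - \<phi>' 0 \<le> c / 2"
proof -
  define \<psi> where "\<psi> t = \<phi> t - t * \<phi>' 0 - c / 2 * t\<^sup>2" for t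
  have "\<psi> 1 \<le> \<psi> 0"
  proof (rule DERIV_nonpos_imp_nonincreasing[of 0 1 \<psi>])
    fix t :: real assume t: "0 \<le> t" "t \<le> 1"
    have "(\<psi> has_real_derivative (\<phi>' t - \<phi>' 0 - c * t)) (at t)"
      unfolding \<psi>_def by (auto intro!: derivative_eq_intros deriv[OF t])
    then show "\<exists>y. (\<psi> has_real_derivative y) (at t) \<and> y \<le> 0"
      using growth[OF t] by auto
  qed simp
  then show ?thesis unfolding \<psi>_def by simp
qed

lemma has_real_derivative_along_line:
  fixes \<phi> :: "'v::real_inner \<Rightarrow> real"
  assumes "(\<phi> has_derivative (\<lambda>d. D \<bullet> d)) (at (p + t *\<^sub>R v))"
  shows "((\<lambda>s. \<phi> (p + s *\<^sub>R v)) has_real_derivative (D \<bullet> v)) (at t)"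
proof -
  have "((\<lambda>s. p + s *\<^sub>R v) has_derivative (\<lambda>s. s *\<^sub>R v)) (at t)"
    by (auto intro!: derivative_eq_intros)
  from has_derivative_compose[OF this assms] show ?thesis
    by (simp add: has_field_derivative_def mult.commute[of _ "D \<bullet> v"] fun_eq_iff)
qed

lemma DERIV_le_of_chord_bound:
  fixes \<phi> :: "real \<Rightarrow> real"
  assumes deriv: "(\<phi> has_real_derivative D) (at 0)"
    and chord: "\<And>t. 0 < t \<Longrightarrow> t \<le> 1 \<Longrightarrow> \<phi> t - \<phi> 0 \<le> t * (A - B * (1 - t))"
  shows "D \<le> A - B"
proof -
  have quotient: "((\<lambda>t. (\<phi> t - \<phi> 0) / (t - 0)) \<longlongrightarrow> D) (at_right 0)"
    using has_field_derivative_at_within[OF deriv, of "{0<..}"] by (simp add: has_field_derivative_iff)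
  have bound: "((\<lambda>t. A - B * (1 - t)) \<longlongrightarrow> A - B * (1 - 0)) (at_right (0::real))"
    by (intro tendsto_intros)
  have "eventually (\<lambda>t. 0 < t \<and> t < 1) (at_right (0::real))"
    by (auto simp: eventually_at_right_field intro!: exI[of _ 1])
  then have "eventually (\<lambda>t. (\<phi> t - \<phi> 0) / (t - 0) \<le> A - B * (1 - t)) (at_right (0::real))"
    by eventually_elim (use chord in \<open>auto simp: divide_le_eq mult.commute\<close>)
  from tendsto_le[OF _ bound quotient this] show ?thesis by simp
qed

lemma lipschitz_gradient_upper_bound:
  fixes \<phi> :: "'v::real_inner \<Rightarrow> real"
  assumes deriv: "\<And>p. (\<phi> has_derivative (\<lambda>d. D p \<bullet> d)) (at p)"
    and lip: "L-lipschitz_on UNIV D"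
  shows "\<phi> q - \<phi> p - D p \<bullet> (q - p) \<le> L / 2 * (norm (q - p))\<^sup>2"
proof -
  define v where "v = q - p"
  have "(\<lambda>s. \<phi> (p + s *\<^sub>R v)) 1 - (\<lambda>s. \<phi> (p + s *\<^sub>R v)) 0 - D (p + 0 *\<^sub>R v) \<bullet> v
        \<le> (L * (norm v)\<^sup>2) / 2"
  proof (rule DERIV_increment_le_quadratic)
    fix t :: real assume t: "0 \<le> t" "t \<le> 1"
    show "((\<lambda>s. \<phi> (p + s *\<^sub>R v)) has_real_derivative D (p + t *\<^sub>R v) \<bullet> v) (at t)"
      by (rule has_real_derivative_along_line[OF deriv])
    have "D (p + t *\<^sub>R v) \<bullet> v - D (p + 0 *\<^sub>R v) \<bullet> v = (D (p + t *\<^sub>R v) - D p) \<bullet> v"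
      by (simp add: inner_diff_left)
    also have "\<dots> \<le> norm (D (p + t *\<^sub>R v) - D p) * norm v"
      by (rule norm_cauchy_schwarz)
    also have "\<dots> \<le> L * norm (t *\<^sub>R v) * norm v"
      using lipschitz_onD[OF lip, of "p + t *\<^sub>R v" p] by (simp add: dist_norm mult_right_mono)
    also have "\<dots> = L * (norm v)\<^sup>2 * t"
      using t by (simp add: power2_eq_square)
    finally show "D (p + t *\<^sub>R v) \<bullet> v - D (p + 0 *\<^sub>R v) \<bullet> v \<le> L * (norm v)\<^sup>2 * t" .
  qed
  then show ?thesis by (simp add: v_def)
qed

lemma norm_gradient_le_lipschitz:
  fixes \<phi> :: "'v::real_inner \<Rightarrow> real"
  assumes deriv: "(\<phi> has_derivative (\<lambda>d. D \<bullet> d)) (at p)"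
    and lip: "M-lipschitz_on UNIV \<phi>"
  shows "norm D \<le> M"
proof -
  have "((\<lambda>s. \<phi> (p + s *\<^sub>R D)) has_real_derivative (D \<bullet> D)) (at 0)"
    using has_real_derivative_along_line[of \<phi> D p 0 D] deriv by simp
  then have "D \<bullet> D \<le> M * norm D - 0"
  proof (rule DERIV_le_of_chord_bound)
    fix t :: real assume t: "0 < t" "t \<le> 1"
    have "\<phi> (p + t *\<^sub>R D) - \<phi> p \<le> M * dist (p + t *\<^sub>R D) p"
      using lipschitz_onD[OF lip, of "p + t *\<^sub>R D" p] by (simp add: dist_real_def)
    also have "\<dots> = t * (M * norm D)"
      using t by (simp add: dist_norm)
    finally show "\<phi> (p + t *\<^sub>R D) - \<phi> (p + 0 *\<^sub>R D) \<le> t * (M * norm D - 0 * (1 - t))"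
      by simp
  qed
  then have "norm D * norm D \<le> M * norm D"
    by (simp add: power2_norm_eq_inner[symmetric] power2_eq_square)
  then show ?thesis
    using lipschitz_on_nonneg[OF lip] by (cases "norm D = 0") auto
qed

lemma has_derivative_split_gradient:
  fixes F :: "'a::real_inner \<times> 'b::real_inner \<Rightarrow> real"
  assumes "\<And>a b. (F has_derivative (\<lambda>(u, w). P a b \<bullet> u + Q a b \<bullet> w)) (at (a, b))"
  shows "(F has_derivative (\<lambda>d. (P (fst p) (snd p), Q (fst p) (snd p)) \<bullet> d)) (at p)"
proof -
  have "(\<lambda>(u, w). P (fst p) (snd p) \<bullet> u + Q (fst p) (snd p) \<bullet> w)
      = (\<lambda>d. (P (fst p) (snd p), Q (fst p) (snd p)) \<bullet> d)"
    by (auto simp: fun_eq_iff)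
  then show ?thesis using assms[of "fst p" "snd p"] by simp
qed

lemma lipschitz_on_curried_snd:
  assumes "L-lipschitz_on UNIV (\<lambda>z. F (fst z) (snd z))"
  shows "dist (F a b) (F a b') \<le> L * dist b b'"
  using lipschitz_onD[OF assms, of "(a, b)" "(a, b')"] by (simp add: dist_Pair_Pair)

lemma lipschitz_on_curried_fst:
  assumes "L-lipschitz_on UNIV (\<lambda>z. F (fst z) (snd z))"
  shows "dist (F a b) (F a' b) \<le> L * dist a a'"
  using lipschitz_onD[OF assms, of "(a, b)" "(a', b)"] by (simp add: dist_Pair_Pair)

lemma norm_blinfun_diff_apply_le:
  fixes F :: "'a::metric_space \<Rightarrow> 'b::metric_space \<Rightarrow> ('c::real_normed_vector \<Rightarrow>\<^sub>L 'd::real_normed_vector)"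
  assumes "\<tau>-lipschitz_on UNIV (\<lambda>z. F (fst z) (snd z))"
  shows "norm ((F a b - F a' b') w) \<le> \<tau> * dist (a, b) (a', b') * norm w"
proof -
  have "norm ((F a b - F a' b') w) \<le> norm (F a b - F a' b') * norm w"
    by (rule norm_blinfun)
  also have "\<dots> \<le> \<tau> * dist (a, b) (a', b') * norm w"
    using lipschitz_onD[OF assms, of "(a, b)" "(a', b')"] by (intro mult_right_mono) (auto simp: dist_norm)
  finally show ?thesis .
qed

lemma inner_gradient_second_order_remainder:
  fixes gy :: "'a::real_inner \<Rightarrow> 'b::real_inner \<Rightarrow> 'b"
    and Jxy :: "'a \<Rightarrow> 'b \<Rightarrow> ('b \<Rightarrow>\<^sub>L 'a)" and Hyy :: "'a \<Rightarrow> 'b \<Rightarrow> ('b \<Rightarrow>\<^sub>L 'b)"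
  assumes gy_deriv: "\<And>a b w. ((\<lambda>z. gy (fst z) (snd z) \<bullet> w) has_derivative
                 (\<lambda>(u, u'). Jxy a b w \<bullet> u + Hyy a b w \<bullet> u')) (at (a, b))"
    and Jxy_lipschitz: "\<tau>-lipschitz_on UNIV (\<lambda>z. Jxy (fst z) (snd z))"
    and Hyy_lipschitz: "\<rho>-lipschitz_on UNIV (\<lambda>z. Hyy (fst z) (snd z))"
  shows "Jxy a b w \<bullet> dx + Hyy a b w \<bullet> ds
     \<le> gy (a + dx) (b + ds) \<bullet> w - gy a b \<bullet> w
        + norm w * norm (dx, ds) * (\<tau> * norm dx + \<rho> * norm ds) / 2"
proof -
  define \<phi> where "\<phi> t = - (gy (a + t *\<^sub>R dx) (b + t *\<^sub>R ds) \<bullet> w)" for t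
  define \<phi>' where "\<phi>' t = - (Jxy (a + t *\<^sub>R dx) (b + t *\<^sub>R ds) w \<bullet> dx
                          + Hyy (a + t *\<^sub>R dx) (b + t *\<^sub>R ds) w \<bullet> ds)" for t
  have "\<phi> 1 - \<phi> 0 - \<phi>' 0 \<le> (norm w * norm (dx, ds) * (\<tau> * norm dx + \<rho> * norm ds)) / 2"
  proof (rule DERIV_increment_le_quadratic)
    fix t :: real assume t: "0 \<le> t" "t \<le> 1"
    have "((\<lambda>s. (a + s *\<^sub>R dx, b + s *\<^sub>R ds)) has_derivative (\<lambda>s. (s *\<^sub>R dx, s *\<^sub>R ds))) (at t)"
      by (auto intro!: derivative_eq_intros)
    from has_derivative_compose[OF this gy_deriv[where a = "a + t *\<^sub>R dx" and b = "b + t *\<^sub>R ds" and w = w]]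
    have "((\<lambda>s. gy (a + s *\<^sub>R dx) (b + s *\<^sub>R ds) \<bullet> w) has_derivative
        (\<lambda>s. (Jxy (a + t *\<^sub>R dx) (b + t *\<^sub>R ds) w \<bullet> dx
               + Hyy (a + t *\<^sub>R dx) (b + t *\<^sub>R ds) w \<bullet> ds) * s)) (at t)"
      by (simp add: algebra_simps)
    then have "((\<lambda>s. gy (a + s *\<^sub>R dx) (b + s *\<^sub>R ds) \<bullet> w) has_real_derivative
        Jxy (a + t *\<^sub>R dx) (b + t *\<^sub>R ds) w \<bullet> dx + Hyy (a + t *\<^sub>R dx) (b + t *\<^sub>R ds) w \<bullet> ds) (at t)"
      by (simp add: has_field_derivative_def)
    then show "(\<phi> has_real_derivative \<phi>' t) (at t)"
      unfolding \<phi>_def \<phi>'_def by (rule DERIV_minus)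
    have "dist (a, b) (a + t *\<^sub>R dx, b + t *\<^sub>R ds) = norm (- (t *\<^sub>R (dx, ds)))"
      by (simp add: dist_norm)
    also have "\<dots> = t * norm (dx, ds)"
      using t by (simp only: norm_minus_cancel norm_scaleR abs_of_nonneg)
    finally have J: "norm ((Jxy a b - Jxy (a + t *\<^sub>R dx) (b + t *\<^sub>R ds)) w)
          \<le> \<tau> * (t * norm (dx, ds)) * norm w"
      and H: "norm ((Hyy a b - Hyy (a + t *\<^sub>R dx) (b + t *\<^sub>R ds)) w)
          \<le> \<rho> * (t * norm (dx, ds)) * norm w"
      using norm_blinfun_diff_apply_le[OF Jxy_lipschitz, of a b "a + t *\<^sub>R dx" "b + t *\<^sub>R ds" w]
        norm_blinfun_diff_apply_le[OF Hyy_lipschitz, of a b "a + t *\<^sub>R dx" "b + t *\<^sub>R ds" w]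
      by simp_all
    have "\<phi>' t - \<phi>' 0 = (Jxy a b - Jxy (a + t *\<^sub>R dx) (b + t *\<^sub>R ds)) w \<bullet> dx
                       + (Hyy a b - Hyy (a + t *\<^sub>R dx) (b + t *\<^sub>R ds)) w \<bullet> ds"
      by (simp add: \<phi>'_def blinfun.diff_left inner_diff_left)
    also have "\<dots> \<le> norm ((Jxy a b - Jxy (a + t *\<^sub>R dx) (b + t *\<^sub>R ds)) w) * norm dx
                   + norm ((Hyy a b - Hyy (a + t *\<^sub>R dx) (b + t *\<^sub>R ds)) w) * norm ds"
      by (intro add_mono norm_cauchy_schwarz)
    also have "\<dots> \<le> (\<tau> * (t * norm (dx, ds)) * norm w) * norm dx
                   + (\<rho> * (t * norm (dx, ds)) * norm w) * norm ds"
      using J H by (intro add_mono mult_right_mono) auto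
    finally show "\<phi>' t - \<phi>' 0 \<le> norm w * norm (dx, ds) * (\<tau> * norm dx + \<rho> * norm ds) * t"
      by (simp add: algebra_simps)
  qed
  then show ?thesis by (simp add: \<phi>_def \<phi>'_def)
qed

lemma prox_sufficient_decrease:
  fixes h :: "'a::real_inner \<Rightarrow> ereal"
  assumes "0 < \<beta>" and prox: "u \<in> prox \<beta> h (v - \<beta> *\<^sub>R G)"
    and proper: "h u \<noteq> -\<infinity>" "h v \<noteq> -\<infinity>"
  shows "h u + ereal (G \<bullet> (u - v) + (norm (u - v))\<^sup>2 / (2 * \<beta>)) \<le> h v"
proof (cases "h v")
  case (real hv)
  have opt: "ereal \<beta> * h u + ereal ((norm (u - (v - \<beta> *\<^sub>R G)))\<^sup>2 / 2)
      \<le> ereal \<beta> * h v + ereal ((norm (v - (v - \<beta> *\<^sub>R G)))\<^sup>2 / 2)"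
    using prox unfolding prox_def by blast
  then obtain hu where hu: "h u = ereal hu"
    using \<open>0 < \<beta>\<close> proper(1) real by (cases "h u") auto
  have "(norm (u - (v - \<beta> *\<^sub>R G)))\<^sup>2
      = (norm (u - v))\<^sup>2 + 2 * \<beta> * (G \<bullet> (u - v)) + (norm (\<beta> *\<^sub>R G))\<^sup>2"
    unfolding power2_norm_eq_inner
    by (simp add: inner_add_left inner_add_right inner_diff_left inner_diff_right inner_commute
        algebra_simps)
  with opt have "\<beta> * hu + ((norm (u - v))\<^sup>2 / 2 + \<beta> * (G \<bullet> (u - v))) \<le> \<beta> * hv"
    by (simp add: hu real add_divide_distrib)
  then have "hu + (G \<bullet> (u - v) + (norm (u - v))\<^sup>2 / (2 * \<beta>)) \<le> hv"
    using \<open>0 < \<beta>\<close> by (simp add: field_simps)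
  then show ?thesis by (simp add: hu real)
qed (use proper in auto)

lemma power_le_inverse_of_log_bound:
  fixes b c :: real
  assumes "0 < b" "b < 1" "0 < c" and T: "real T \<ge> ln c / ln (inverse b)"
  shows "c * b ^ T \<le> 1"
proof -
  have "ln (inverse b) > 0" using assms by (simp add: ln_inverse)
  then have "ln c \<le> real T * ln (inverse b)"
    using T by (simp add: pos_divide_le_eq)
  then have "ln c + ln (b ^ T) \<le> 0"
    using assms by (simp add: ln_inverse ln_realpow)
  then have "ln (c * b ^ T) \<le> ln 1"
    using assms by (simp add: ln_mult)
  then show ?thesis
    using assms by (subst (asm) ln_le_cancel_iff) auto
qed

lemma power2_sum_le:
  fixes x y :: real
  shows "(x + y)\<^sup>2 \<le> 2 * x\<^sup>2 + 2 * y\<^sup>2"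
  using sum_squares_bound[of x y] by (simp add: power2_sum)

section \<open>The lower-level problem\<close>

locale lower_level =
  fixes g :: "'a::euclidean_space \<Rightarrow> 'b::euclidean_space \<Rightarrow> real"
    and gx :: "'a \<Rightarrow> 'b \<Rightarrow> 'a" and gy :: "'a \<Rightarrow> 'b \<Rightarrow> 'b" and \<mu> L :: real
  assumes g_deriv: "\<And>a b. ((\<lambda>z. g (fst z) (snd z)) has_derivative
                 (\<lambda>(u, w). gx a b \<bullet> u + gy a b \<bullet> w)) (at (a, b))"
    and grad_g_lipschitz: "L-lipschitz_on UNIV (\<lambda>z. (gx (fst z) (snd z), gy (fst z) (snd z)))"
    and mu_pos: "\<mu> > 0"
    and strongly_convex_g: "\<And>a. strongly_convex \<mu> (g a)"
begin

lemma L_nonneg: "0 \<le> L"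
  using grad_g_lipschitz lipschitz_on_nonneg by blast

lemma has_derivative_g_snd: "(g a has_derivative (\<lambda>w. gy a b \<bullet> w)) (at b)"
proof -
  have "((\<lambda>w. (a, w)) has_derivative (\<lambda>w. (0, w))) (at b)"
    by (auto intro!: derivative_eq_intros)
  from has_derivative_compose[OF this g_deriv[of a b]] show ?thesis by simp
qed

lemma gy_lipschitz_snd: "L-lipschitz_on UNIV (gy a)"
proof (rule lipschitz_onI[OF _ L_nonneg])
  fix b b' :: 'b
  have "dist (gy a b) (gy a b') \<le> dist (gx a b, gy a b) (gx a b', gy a b')"
    using dist_snd_le[of "(gx a b, gy a b)" "(gx a b', gy a b')"] by simp
  also have "\<dots> \<le> L * dist b b'"
    by (rule lipschitz_on_curried_snd[OF grad_g_lipschitz])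
  finally show "dist (gy a b) (gy a b') \<le> L * dist b b'" .
qed

lemma norm_gy_diff_fst_le: "norm (gy a b - gy a' b) \<le> L * norm (a - a')"
proof -
  have "dist (gy a b) (gy a' b) \<le> dist (gx a b, gy a b) (gx a' b, gy a' b)"
    using dist_snd_le[of "(gx a b, gy a b)" "(gx a' b, gy a' b)"] by simp
  also have "\<dots> \<le> L * dist a a'"
    by (rule lipschitz_on_curried_fst[OF grad_g_lipschitz])
  finally show ?thesis by (simp add: dist_norm)
qed

lemma strongly_convex_gradient_inequality:
  "g a y + gy a y \<bullet> (w - y) + \<mu> / 2 * (norm (w - y))\<^sup>2 \<le> g a w"
proof -
  define d where "d = w - y"
  have "((\<lambda>s. g a (y + s *\<^sub>R d)) has_real_derivative (gy a y \<bullet> d)) (at 0)"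
    using has_real_derivative_along_line[of "g a" "gy a y" y 0 d] has_derivative_g_snd by simp
  then have "gy a y \<bullet> d \<le> (g a w - g a y) - \<mu> / 2 * (norm d)\<^sup>2"
  proof (rule DERIV_le_of_chord_bound)
    fix t :: real assume t: "0 < t" "t \<le> 1"
    have "g a (t *\<^sub>R w + (1 - t) *\<^sub>R y) \<le> t * g a w + (1 - t) * g a y
            - \<mu> / 2 * t * (1 - t) * (norm (w - y))\<^sup>2"
      using strongly_convex_g[of a] t unfolding strongly_convex_def by auto
    moreover have "t *\<^sub>R w + (1 - t) *\<^sub>R y = y + t *\<^sub>R d"
      by (simp add: d_def algebra_simps)
    ultimately show "g a (y + t *\<^sub>R d) - g a (y + 0 *\<^sub>R d)
        \<le> t * ((g a w - g a y) - \<mu> / 2 * (norm d)\<^sup>2 * (1 - t))"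
      by (simp add: d_def algebra_simps)
  qed
  then show ?thesis by (simp add: d_def)
qed

lemma gy_strongly_monotone: "\<mu> * (norm (y - w))\<^sup>2 \<le> (gy a y - gy a w) \<bullet> (y - w)"
proof -
  have "gy a y \<bullet> (w - y) = - (gy a y \<bullet> (y - w))"
    by (simp add: inner_diff_right)
  then show ?thesis
    using strongly_convex_gradient_inequality[of a y w] strongly_convex_gradient_inequality[of a w y]
    by (simp add: norm_minus_commute inner_diff_left)
qed

lemma descent_inequality: "g a w \<le> g a y + gy a y \<bullet> (w - y) + L / 2 * (norm (w - y))\<^sup>2"
  using lipschitz_gradient_upper_bound[of "g a" "gy a" L w y] has_derivative_g_snd gy_lipschitz_snd
  by auto

lemma gradient_step_decrease:
  assumes "L > 0"
  shows "g a (y - (1 / L) *\<^sub>R gy a y) \<le> g a y - (norm (gy a y))\<^sup>2 / (2 * L)"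
proof -
  have "g a (y - (1 / L) *\<^sub>R gy a y)
      \<le> g a y + gy a y \<bullet> (- ((1 / L) *\<^sub>R gy a y)) + L / 2 * (norm ((1 / L) *\<^sub>R gy a y))\<^sup>2"
    using descent_inequality[of a "y - (1 / L) *\<^sub>R gy a y" y] by simp
  also have "\<dots> = g a y - (norm (gy a y))\<^sup>2 / (2 * L)"
    using assms by (simp add: dot_square_norm power_mult_distrib power2_eq_square field_simps)
  finally show ?thesis .
qed

lemma ex_minimizer: "\<exists>y. \<forall>y'. g a y \<le> g a y'"
proof -
  define R where "R = 2 * norm (gy a 0) / \<mu>"
  have "R \<ge> 0" using mu_pos by (simp add: R_def)
  have cont: "continuous_on (cball 0 R) (g a)"
    by (intro continuous_at_imp_continuous_on ballI has_derivative_continuous[OF has_derivative_g_snd])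
  have "cball 0 R \<noteq> {}" using \<open>R \<ge> 0\<close> by simp
  then obtain y0 where y0: "\<forall>y\<in>cball 0 R. g a y0 \<le> g a y"
    using continuous_attains_inf[OF compact_cball _ cont] by blast
  have "g a y0 \<le> g a y'" for y'
  proof (cases "norm y' \<le> R")
    case True then show ?thesis using y0 by simp
  next
    case False
    have "norm (gy a 0) * norm y' \<le> \<mu> / 2 * norm y' * norm y'"
    proof -
      have "norm (gy a 0) * norm y' = \<mu> / 2 * R * norm y'" using mu_pos by (simp add: R_def)
      also have "\<dots> \<le> \<mu> / 2 * norm y' * norm y'"
        using False mu_pos by (intro mult_right_mono mult_left_mono) auto
      finally show ?thesis .
    qed
    moreover have "- (norm (gy a 0) * norm y') \<le> gy a 0 \<bullet> y'"
      using norm_cauchy_schwarz[of "- gy a 0" y'] by simp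
    moreover have "g a 0 + gy a 0 \<bullet> y' + \<mu> / 2 * (norm y' * norm y') \<le> g a y'"
      using strongly_convex_gradient_inequality[of a 0 y'] by (simp add: power2_eq_square)
    ultimately have "g a 0 \<le> g a y'"
      by (simp add: mult.assoc)
    moreover have "g a y0 \<le> g a 0" using y0 \<open>R \<ge> 0\<close> by simp
    ultimately show ?thesis by linarith
  qed
  then show ?thesis by blast
qed

lemma minimizer_gradient_zero:
  assumes "\<forall>y'. g a y \<le> g a y'"
  shows "gy a y = 0"
proof -
  have "((\<lambda>s. g a (y + s *\<^sub>R gy a y)) has_real_derivative (gy a y \<bullet> gy a y)) (at 0)"
    using has_real_derivative_along_line[of "g a" "gy a y" y 0] has_derivative_g_snd by simp
  then have "gy a y \<bullet> gy a y = 0"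
    by (rule DERIV_local_min[of _ _ 0 1]) (use assms in auto)
  then show ?thesis by simp
qed

lemma ex1_minimizer: "\<exists>!y. \<forall>y'. g a y \<le> g a y'"
proof -
  obtain y where y: "\<forall>y'. g a y \<le> g a y'" using ex_minimizer by blast
  moreover have "y' = y" if "\<forall>y''. g a y' \<le> g a y''" for y'
  proof -
    have "\<mu> / 2 * (norm (y' - y))\<^sup>2 \<le> 0"
      using strongly_convex_gradient_inequality[of a y y'] minimizer_gradient_zero[OF y] that[rule_format, of y]
      by simp
    then show ?thesis using mu_pos by (simp add: mult_le_0_iff)
  qed
  ultimately show ?thesis by blast
qed

lemma ystar_minimal: "g a (ystar g a) \<le> g a y"
  unfolding ystar_def using theI'[OF ex1_minimizer[of a]] by blast

lemma gy_ystar: "gy a (ystar g a) = 0"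
  using minimizer_gradient_zero ystar_minimal by blast

lemma ystar_lipschitz: "norm (ystar g a - ystar g a') \<le> L / \<mu> * norm (a - a')"
proof -
  define d where "d = ystar g a - ystar g a'"
  have "\<mu> * (norm d)\<^sup>2 \<le> (gy a' (ystar g a) - gy a' (ystar g a')) \<bullet> d"
    unfolding d_def by (rule gy_strongly_monotone)
  also have "\<dots> = (gy a' (ystar g a) - gy a (ystar g a)) \<bullet> d"
    by (simp add: gy_ystar)
  also have "\<dots> \<le> norm (gy a' (ystar g a) - gy a (ystar g a)) * norm d"
    by (rule norm_cauchy_schwarz)
  also have "\<dots> \<le> L * norm (a - a') * norm d"
    using norm_gy_diff_fst_le[of a' _ a] by (simp add: mult_right_mono norm_minus_commute)
  finally have "\<mu> * norm d \<le> L * norm (a - a')"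
    by (cases "norm d = 0") (auto simp: power2_eq_square L_nonneg)
  then show ?thesis using mu_pos by (simp add: d_def field_simps)
qed

end

section \<open>Nesterov's accelerated gradient method\<close>

text \<open>In the next lemma \<open>fu, fu', fy, fs\<close> stand for the values of \<open>g\<close> at the current, next and
  extrapolated iterates and at \<open>y*\<close>; \<open>aa, bb, gg, ab, ag, bg\<close> for the inner products of the
  estimate-sequence error \<open>A\<close>, the extrapolation error \<open>B\<close> and the gradient.\<close>
lemma agd_potential_algebra:
  fixes q L fy fu fu' fs aa bb gg ab ag bg :: real
  assumes L: "L > 0" and q: "0 < q" "q < 1"
    and P1: "fu' \<le> fy - gg / (2 * L)"
    and P2: "fs \<ge> fy - bg + q\<^sup>2 * L / 2 * bb"
    and P3: "fu \<ge> fy + q * (bg - ag)"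
    and psd: "aa - 2 * ab + bb \<ge> 0"
  shows "fu' - fs + q\<^sup>2 * L / 2 * ((1 - q)\<^sup>2 * aa + q\<^sup>2 * bb + gg / (q\<^sup>2 * L\<^sup>2)
            + 2 * q * (1 - q) * ab - 2 * (1 - q) / (q * L) * ag - 2 / L * bg)
         \<le> (1 - q) * (fu - fs + q\<^sup>2 * L / 2 * aa)"
proof -
  have eq: "q\<^sup>2 * L / 2 * ((1 - q)\<^sup>2 * aa + q\<^sup>2 * bb + gg / (q\<^sup>2 * L\<^sup>2)
            + 2 * q * (1 - q) * ab - 2 * (1 - q) / (q * L) * ag - 2 / L * bg)
     = q\<^sup>2 * L / 2 * ((1 - q)\<^sup>2 * aa + q\<^sup>2 * bb + 2 * q * (1 - q) * ab)
       + gg / (2 * L) - q * (1 - q) * ag - q\<^sup>2 * bg"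
    using L q by (simp add: field_simps power2_eq_square)
  \<comment> \<open>the gap is a nonnegative combination of the hypotheses\<close>
  have gap: "(1 - q) * (fu - fs + q\<^sup>2 * L / 2 * aa)
      - (fu' - fs + (q\<^sup>2 * L / 2 * ((1 - q)\<^sup>2 * aa + q\<^sup>2 * bb + 2 * q * (1 - q) * ab)
       + gg / (2 * L) - q * (1 - q) * ag - q\<^sup>2 * bg))
     = (fy - gg / (2 * L) - fu') + q * (fs - (fy - bg + q\<^sup>2 * L / 2 * bb))
       + (1 - q) * (fu - (fy + q * (bg - ag))) + q * (1 - q) * (q\<^sup>2 * L / 2) * (aa - 2 * ab + bb)"
    using L by (simp add: field_simps power2_eq_square)
  have "q * (fs - (fy - bg + q\<^sup>2 * L / 2 * bb)) \<ge> 0"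
    using P2 q by (intro mult_nonneg_nonneg) auto
  moreover have "(1 - q) * (fu - (fy + q * (bg - ag))) \<ge> 0"
    using P3 q by (intro mult_nonneg_nonneg) auto
  moreover have "q * (1 - q) * (q\<^sup>2 * L / 2) * (aa - 2 * ab + bb) \<ge> 0"
    using psd q L by (intro mult_nonneg_nonneg) auto
  ultimately show ?thesis unfolding eq using P1 gap by linarith
qed

lemma norm_add_scaleR_square_le:
  fixes x y :: "'v::real_inner"
  assumes "0 \<le> q"
  shows "(norm (x + q *\<^sub>R y))\<^sup>2 \<le> (1 + q) * ((norm x)\<^sup>2 + q * (norm y)\<^sup>2)"
proof -
  have "0 \<le> q * (norm (x - y))\<^sup>2" using assms by simp
  then show ?thesis
    unfolding power2_norm_eq_inner
    by (simp add: inner_add_left inner_add_right inner_diff_left inner_diff_right inner_commute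
        algebra_simps)
qed

lemma agd_estimate_update:
  fixes u u' z gv ys :: "'v::euclidean_space"
  assumes "0 < q" "0 < L" and u': "u' = z - (1 / L) *\<^sub>R gv"
  shows "(1 / q) *\<^sub>R ((1 + q) *\<^sub>R (u' + ((1 - q) / (1 + q)) *\<^sub>R (u' - u)) - u') - ys
    = (1 - q) *\<^sub>R ((1 / q) *\<^sub>R ((1 + q) *\<^sub>R z - u) - ys) + q *\<^sub>R (z - ys) - (1 / (q * L)) *\<^sub>R gv"
proof -
  have scaled: "(1 + q) *\<^sub>R (u' + ((1 - q) / (1 + q)) *\<^sub>R (u' - u))
      = (1 + q) *\<^sub>R u' + (1 - q) *\<^sub>R (u' - u)"
    using assms(1) by (simp add: scaleR_add_right)
  show ?thesis
    unfolding scaled unfolding u'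
    by (intro euclidean_eqI[where 'a='v])
      (use assms(1,2) in \<open>simp add: inner_diff_left inner_add_left field_simps\<close>)
qed

lemma power2_norm_agd_estimate:
  fixes A B G :: "'v::real_inner"
  assumes "0 < q" "0 < L"
  shows "(norm ((1 - q) *\<^sub>R A + q *\<^sub>R B - (1 / (q * L)) *\<^sub>R G))\<^sup>2
      = (1 - q)\<^sup>2 * (A \<bullet> A) + q\<^sup>2 * (B \<bullet> B) + (G \<bullet> G) / (q\<^sup>2 * L\<^sup>2)
        + 2 * q * (1 - q) * (A \<bullet> B) - 2 * (1 - q) / (q * L) * (A \<bullet> G) - 2 / L * (B \<bullet> G)"
  unfolding power2_norm_eq_inner using assms
  by (simp add: inner_add_left inner_add_right inner_diff_left inner_diff_right inner_commute
      field_simps power2_eq_square)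

context lower_level
begin

text \<open>The point \<open>(1/q)((1 + q) z - u)\<close> is the estimate-sequence iterate of Nesterov's method
  for the state \<open>(u, z)\<close>, with \<open>q = 1/sqrt \<kappa>\<close>.\<close>
definition agd_potential :: "real \<Rightarrow> 'a \<Rightarrow> 'b \<times> 'b \<Rightarrow> real" where
  "agd_potential q a s = g a (fst s) - g a (ystar g a)
     + \<mu> / 2 * (norm ((1 / q) *\<^sub>R ((1 + q) *\<^sub>R snd s - fst s) - ystar g a))\<^sup>2"

definition agd :: "nat \<Rightarrow> 'a \<Rightarrow> 'b \<Rightarrow> 'b" where
  "agd T = yT gy (1 / L) ((sqrt (L / \<mu>) - 1) / (sqrt (L / \<mu>) + 1)) T"

lemma agd_potential_step:
  assumes q: "0 < q" "q < 1" and mu_eq: "\<mu> = q\<^sup>2 * L"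
  shows "agd_potential q a (inner_state gy (1 / L) ((1 - q) / (1 + q)) a y0 (Suc t))
         \<le> (1 - q) * agd_potential q a (inner_state gy (1 / L) ((1 - q) / (1 + q)) a y0 t)"
proof -
  define \<eta> where "\<eta> = (1 - q) / (1 + q)"
  define ys where "ys = ystar g a"
  obtain u z where state: "inner_state gy (1 / L) \<eta> a y0 t = (u, z)"
    by (cases "inner_state gy (1 / L) \<eta> a y0 t")
  define gv where "gv = gy a z"
  define u' where "u' = z - (1 / L) *\<^sub>R gv"
  define z' where "z' = u' + \<eta> *\<^sub>R (u' - u)"
  have next_state: "inner_state gy (1 / L) \<eta> a y0 (Suc t) = (u', z')"
    using state by (simp add: u'_def z'_def gv_def Let_def)
  have Lpos: "L > 0"
    using mu_pos q by (simp add: mu_eq zero_less_mult_iff)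
  define A where "A = (1 / q) *\<^sub>R ((1 + q) *\<^sub>R z - u) - ys"
  define B where "B = z - ys"
  have next_estimate: "(1 / q) *\<^sub>R ((1 + q) *\<^sub>R z' - u') - ys
      = (1 - q) *\<^sub>R A + q *\<^sub>R B - (1 / (q * L)) *\<^sub>R gv"
    unfolding z'_def \<eta>_def A_def B_def by (rule agd_estimate_update[OF q(1) Lpos u'_def])
  have u_minus_z: "u - z = q *\<^sub>R (B - A)"
    using q by (simp add: A_def B_def algebra_simps)
  have P1: "g a u' \<le> g a z - (gv \<bullet> gv) / (2 * L)"
    using gradient_step_decrease[OF Lpos, of a z] by (simp add: u'_def gv_def dot_square_norm)
  have P2: "g a ys \<ge> g a z - B \<bullet> gv + q\<^sup>2 * L / 2 * (B \<bullet> B)"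
  proof -
    have "g a z + gv \<bullet> (ys - z) + \<mu> / 2 * (norm (ys - z))\<^sup>2 \<le> g a ys"
      unfolding gv_def by (rule strongly_convex_gradient_inequality)
    moreover have "gv \<bullet> (ys - z) = - (B \<bullet> gv)"
      by (simp add: B_def inner_diff_left inner_diff_right inner_commute)
    moreover have "(norm (ys - z))\<^sup>2 = B \<bullet> B"
      by (simp add: B_def power2_norm_eq_inner inner_diff_left inner_diff_right inner_commute)
    ultimately show ?thesis by (simp add: mu_eq)
  qed
  have P3: "g a u \<ge> g a z + q * (B \<bullet> gv - A \<bullet> gv)"
  proof -
    have "g a z + gv \<bullet> (u - z) + \<mu> / 2 * (norm (u - z))\<^sup>2 \<le> g a u"
      unfolding gv_def by (rule strongly_convex_gradient_inequality)
    moreover have "gv \<bullet> (u - z) = q * (B \<bullet> gv - A \<bullet> gv)"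
      by (simp add: u_minus_z inner_diff_right inner_commute)
    moreover have "0 \<le> \<mu> / 2 * (norm (u - z))\<^sup>2" using mu_pos by simp
    ultimately show ?thesis by linarith
  qed
  have psd: "A \<bullet> A - 2 * (A \<bullet> B) + B \<bullet> B \<ge> 0"
    using inner_ge_zero[of "A - B"] by (simp add: inner_diff_left inner_diff_right inner_commute)
  have "agd_potential q a (u', z') = g a u' - g a ys + q\<^sup>2 * L / 2 * ((1 - q)\<^sup>2 * (A \<bullet> A)
        + q\<^sup>2 * (B \<bullet> B) + (gv \<bullet> gv) / (q\<^sup>2 * L\<^sup>2) + 2 * q * (1 - q) * (A \<bullet> B)
        - 2 * (1 - q) / (q * L) * (A \<bullet> gv) - 2 / L * (B \<bullet> gv))"
    using power2_norm_agd_estimate[OF q(1) Lpos, of A B gv] unfolding agd_potential_def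
    by (simp add: ys_def[symmetric] next_estimate mu_eq)
  also have "\<dots> \<le> (1 - q) * (g a u - g a ys + q\<^sup>2 * L / 2 * (A \<bullet> A))"
    by (rule agd_potential_algebra[OF Lpos q P1 P2 P3 psd])
  also have "\<dots> = (1 - q) * agd_potential q a (u, z)"
    unfolding agd_potential_def by (simp add: A_def ys_def mu_eq power2_norm_eq_inner)
  finally show ?thesis
    unfolding \<eta>_def[symmetric] next_state state .
qed

lemma agd_potential_inner_state:
  assumes "0 < q" "q < 1" "\<mu> = q\<^sup>2 * L"
  shows "agd_potential q a (inner_state gy (1 / L) ((1 - q) / (1 + q)) a y0 t)
         \<le> (1 - q) ^ t * agd_potential q a (y0, y0)"
proof (induction t)
  case (Suc t)
  have "agd_potential q a (inner_state gy (1 / L) ((1 - q) / (1 + q)) a y0 (Suc t))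
        \<le> (1 - q) * agd_potential q a (inner_state gy (1 / L) ((1 - q) / (1 + q)) a y0 t)"
    by (rule agd_potential_step[OF assms])
  also have "\<dots> \<le> (1 - q) * ((1 - q) ^ t * agd_potential q a (y0, y0))"
    using Suc.IH assms by (intro mult_left_mono) auto
  finally show ?case by simp
qed simp

lemma agd_potential_initial:
  assumes "0 < q"
  shows "agd_potential q a (y0, y0) \<le> (L + \<mu>) / 2 * (norm (y0 - ystar g a))\<^sup>2"
proof -
  have "(1 / q) *\<^sub>R ((1 + q) *\<^sub>R y0 - y0) = y0"
    using assms by (simp add: algebra_simps)
  then have "agd_potential q a (y0, y0)
      = g a y0 - g a (ystar g a) + \<mu> / 2 * (norm (y0 - ystar g a))\<^sup>2"
    by (simp add: agd_potential_def)
  moreover have "g a y0 - g a (ystar g a) \<le> L / 2 * (norm (y0 - ystar g a))\<^sup>2"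
    using descent_inequality[of a y0 "ystar g a"] by (simp add: gy_ystar)
  ultimately show ?thesis by (simp add: add_divide_distrib distrib_right)
qed

lemma dist_ystar_le_agd_potential:
  assumes "0 < q"
  shows "\<mu> / 2 * (norm (snd s - ystar g a))\<^sup>2 \<le> agd_potential q a s"
proof -
  define ys where "ys = ystar g a"
  obtain u z where s: "s = (u, z)" by (cases s)
  define v where "v = (1 / q) *\<^sub>R ((1 + q) *\<^sub>R z - u)"
  have "\<mu> / 2 * (norm (u - ys))\<^sup>2 \<le> g a u - g a ys"
    using strongly_convex_gradient_inequality[of a ys u] by (simp add: ys_def gy_ystar)
  then have sum_le: "\<mu> / 2 * ((norm (u - ys))\<^sup>2 + (norm (v - ys))\<^sup>2) \<le> agd_potential q a s"
    unfolding agd_potential_def s v_def ys_def by (simp add: distrib_left)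
  \<comment> \<open>z is the convex combination (u + q v) / (1 + q)\<close>
  have "(1 + q) *\<^sub>R (z - ys) = (u - ys) + q *\<^sub>R (v - ys)"
    using assms by (simp add: v_def algebra_simps)
  then have "(norm ((1 + q) *\<^sub>R (z - ys)))\<^sup>2 \<le> (1 + q) * ((norm (u - ys))\<^sup>2 + q * (norm (v - ys))\<^sup>2)"
    using norm_add_scaleR_square_le[of q "u - ys" "v - ys"] assms by simp
  moreover have "(norm ((1 + q) *\<^sub>R (z - ys)))\<^sup>2 = (1 + q) * ((1 + q) * (norm (z - ys))\<^sup>2)"
    using assms by (simp add: power_mult_distrib power2_eq_square)
  ultimately have "(1 + q) * (norm (z - ys))\<^sup>2 \<le> (norm (u - ys))\<^sup>2 + q * (norm (v - ys))\<^sup>2"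
    using assms by simp
  also have "\<dots> \<le> (1 + q) * ((norm (u - ys))\<^sup>2 + (norm (v - ys))\<^sup>2)"
    using assms by (simp add: algebra_simps)
  finally have "(norm (z - ys))\<^sup>2 \<le> (norm (u - ys))\<^sup>2 + (norm (v - ys))\<^sup>2"
    using assms by simp
  then have "\<mu> / 2 * (norm (z - ys))\<^sup>2 \<le> \<mu> / 2 * ((norm (u - ys))\<^sup>2 + (norm (v - ys))\<^sup>2)"
    using mu_pos by (intro mult_left_mono) auto
  with sum_le show ?thesis by (simp add: s ys_def)
qed

lemma agd_convergence:
  assumes "\<mu> < L"
  shows "(norm (agd T a y0 - ystar g a))\<^sup>2
         \<le> (1 + L / \<mu>) * (1 - 1 / sqrt (L / \<mu>)) ^ T * (norm (y0 - ystar g a))\<^sup>2"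
proof -
  define r where "r = sqrt (L / \<mu>)"
  define q where "q = 1 / r"
  have "r > 1" using assms mu_pos by (simp add: r_def)
  then have q: "0 < q" "q < 1" by (auto simp: q_def)
  have mu_eq: "\<mu> = q\<^sup>2 * L"
    using assms mu_pos by (simp add: q_def r_def power_divide)
  have "1 - q = (r - 1) / r" "1 + q = (r + 1) / r"
    using \<open>r > 1\<close> by (auto simp: q_def field_simps)
  then have "(r - 1) / (r + 1) = (1 - q) / (1 + q)"
    using \<open>r > 1\<close> by simp
  then have agd_eq: "agd T a y0 = snd (inner_state gy (1 / L) ((1 - q) / (1 + q)) a y0 T)"
    by (simp add: agd_def yT_def r_def)
  have "\<mu> / 2 * (norm (agd T a y0 - ystar g a))\<^sup>2
        \<le> agd_potential q a (inner_state gy (1 / L) ((1 - q) / (1 + q)) a y0 T)"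
    unfolding agd_eq by (rule dist_ystar_le_agd_potential[OF q(1)])
  also have "\<dots> \<le> (1 - q) ^ T * agd_potential q a (y0, y0)"
    by (rule agd_potential_inner_state[OF q mu_eq])
  also have "\<dots> \<le> (1 - q) ^ T * ((L + \<mu>) / 2 * (norm (y0 - ystar g a))\<^sup>2)"
    using q by (intro mult_left_mono agd_potential_initial) auto
  finally show ?thesis
    using mu_pos by (simp add: q_def r_def field_simps)
qed

lemma agd_warm_start:
  assumes "\<mu> < L" and contraction: "(1 + L / \<mu>) * (1 - 1 / sqrt (L / \<mu>)) ^ T \<le> 1 / 8"
  shows "(norm (agd T a' b - ystar g a'))\<^sup>2
         \<le> (norm (b - ystar g a))\<^sup>2 / 4 + (L / \<mu>)\<^sup>2 * (norm (a' - a))\<^sup>2 / 4"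
proof -
  define \<delta> D where "\<delta> = norm (b - ystar g a)" and "D = norm (a' - a)"
  have "norm (b - ystar g a') \<le> norm (b - ystar g a) + norm (ystar g a - ystar g a')"
    using norm_triangle_ineq[of "b - ystar g a" "ystar g a - ystar g a'"] by simp
  also have "\<dots> \<le> \<delta> + L / \<mu> * D"
    using ystar_lipschitz[of a a'] by (simp add: \<delta>_def D_def norm_minus_commute)
  finally have "(norm (b - ystar g a'))\<^sup>2 \<le> (\<delta> + L / \<mu> * D)\<^sup>2"
    by (intro power_mono) auto
  also have "\<dots> \<le> 2 * \<delta>\<^sup>2 + 2 * (L / \<mu> * D)\<^sup>2"
    by (rule power2_sum_le)
  finally have dist_le: "(norm (b - ystar g a'))\<^sup>2 \<le> 2 * \<delta>\<^sup>2 + 2 * (L / \<mu> * D)\<^sup>2" .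
  have "(norm (agd T a' b - ystar g a'))\<^sup>2
        \<le> (1 + L / \<mu>) * (1 - 1 / sqrt (L / \<mu>)) ^ T * (norm (b - ystar g a'))\<^sup>2"
    by (rule agd_convergence[OF assms(1)])
  also have "\<dots> \<le> 1 / 8 * (norm (b - ystar g a'))\<^sup>2"
    using contraction by (intro mult_right_mono) auto
  also have "\<dots> \<le> 1 / 8 * (2 * \<delta>\<^sup>2 + 2 * (L / \<mu> * D)\<^sup>2)"
    using dist_le by simp
  also have "\<dots> = \<delta>\<^sup>2 / 4 + (L / \<mu>)\<^sup>2 * D\<^sup>2 / 4"
    using mu_pos by (simp add: field_simps power2_eq_square)
  finally show ?thesis
    by (simp add: \<delta>_def D_def)
qed

end

section \<open>The upper-level objective\<close>

locale bilevel = lower_level g gx gy \<mu> L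
  for g :: "'a::euclidean_space \<Rightarrow> 'b::euclidean_space \<Rightarrow> real"
    and gx :: "'a \<Rightarrow> 'b \<Rightarrow> 'a" and gy :: "'a \<Rightarrow> 'b \<Rightarrow> 'b" and \<mu> L :: real +
  fixes f :: "'a \<Rightarrow> 'b \<Rightarrow> real" and fx :: "'a \<Rightarrow> 'b \<Rightarrow> 'a" and fy :: "'a \<Rightarrow> 'b \<Rightarrow> 'b"
    and Jxy :: "'a \<Rightarrow> 'b \<Rightarrow> ('b \<Rightarrow>\<^sub>L 'a)" and Hyy :: "'a \<Rightarrow> 'b \<Rightarrow> ('b \<Rightarrow>\<^sub>L 'b)"
    and M \<tau> \<rho> :: real
  assumes f_deriv: "\<And>a b. ((\<lambda>z. f (fst z) (snd z)) has_derivative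
                 (\<lambda>(u, w). fx a b \<bullet> u + fy a b \<bullet> w)) (at (a, b))"
    and gy_deriv: "\<And>a b w. ((\<lambda>z. gy (fst z) (snd z) \<bullet> w) has_derivative
                 (\<lambda>(u, u'). Jxy a b w \<bullet> u + Hyy a b w \<bullet> u')) (at (a, b))"
    and f_lipschitz: "M-lipschitz_on UNIV (\<lambda>z. f (fst z) (snd z))"
    and grad_f_lipschitz: "L-lipschitz_on UNIV (\<lambda>z. (fx (fst z) (snd z), fy (fst z) (snd z)))"
    and Jxy_lipschitz: "\<tau>-lipschitz_on UNIV (\<lambda>z. Jxy (fst z) (snd z))"
    and Hyy_lipschitz: "\<rho>-lipschitz_on UNIV (\<lambda>z. Hyy (fst z) (snd z))"
begin

lemma M_nonneg: "0 \<le> M"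
  using f_lipschitz lipschitz_on_nonneg by blast

lemma tau_nonneg: "0 \<le> \<tau>"
  using Jxy_lipschitz lipschitz_on_nonneg by blast

lemma rho_nonneg: "0 \<le> \<rho>"
  using Hyy_lipschitz lipschitz_on_nonneg by blast

lemma norm_fy_le: "norm (fy a b) \<le> M"
proof -
  have "norm (fx a b, fy a b) \<le> M"
    using norm_gradient_le_lipschitz[OF has_derivative_split_gradient[OF f_deriv, of "(a, b)"]
        f_lipschitz]
    by simp
  then show ?thesis using norm_snd_le[of "fy a b" "fx a b"] by simp
qed

lemma Hyy_coercive: "\<mu> * (norm w)\<^sup>2 \<le> Hyy a b w \<bullet> w"
proof -
  have path: "((\<lambda>s. (a, b + s *\<^sub>R w)) has_derivative (\<lambda>s. (0, s *\<^sub>R w))) (at 0)"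
    by (auto intro!: derivative_eq_intros)
  have "((\<lambda>z. gy (fst z) (snd z) \<bullet> w) has_derivative
      (\<lambda>(u, u'). Jxy a b w \<bullet> u + Hyy a b w \<bullet> u')) (at (a, b + 0 *\<^sub>R w))"
    using gy_deriv by simp
  from has_derivative_compose[OF path this]
  have "((\<lambda>s. gy a (b + s *\<^sub>R w) \<bullet> w) has_derivative (\<lambda>s. (Hyy a b w \<bullet> w) * s)) (at 0)"
    by (simp add: mult.commute)
  then have "((\<lambda>s. - (gy a (b + s *\<^sub>R w) \<bullet> w)) has_real_derivative - (Hyy a b w \<bullet> w)) (at 0)"
    by (intro DERIV_minus) (simp add: has_field_derivative_def)
  then have "- (Hyy a b w \<bullet> w) \<le> - (\<mu> * (norm w)\<^sup>2) - 0"
  proof (rule DERIV_le_of_chord_bound)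
    fix t :: real assume t: "0 < t" "t \<le> 1"
    have "t * (t * (\<mu> * (norm w)\<^sup>2)) \<le> t * ((gy a (b + t *\<^sub>R w) - gy a b) \<bullet> w)"
      using gy_strongly_monotone[where a = a and y = "b + t *\<^sub>R w" and w = b] t
      by (simp add: power2_eq_square algebra_simps)
    then have "t * (\<mu> * (norm w)\<^sup>2) \<le> (gy a (b + t *\<^sub>R w) - gy a b) \<bullet> w"
      using t by simp
    then show "- (gy a (b + t *\<^sub>R w) \<bullet> w) - - (gy a (b + 0 *\<^sub>R w) \<bullet> w)
        \<le> t * (- (\<mu> * (norm w)\<^sup>2) - 0 * (1 - t))"
      by (simp add: inner_diff_left)
  qed
  then show ?thesis by simp
qed

lemma norm_le_of_Hyy_eq_fy:
  assumes "Hyy a b w = fy a b"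
  shows "norm w \<le> M / \<mu>"
proof -
  have "\<mu> * (norm w)\<^sup>2 \<le> fy a b \<bullet> w"
    using Hyy_coercive[of w a b] assms by simp
  also have "\<dots> \<le> M * norm w"
    using norm_cauchy_schwarz[of "fy a b" w] norm_fy_le[of a b]
    by (meson norm_ge_zero mult_right_mono order_trans)
  finally have "\<mu> * norm w \<le> M"
    using M_nonneg by (cases "norm w = 0") (auto simp: power2_eq_square)
  then show ?thesis using mu_pos by (simp add: field_simps)
qed

definition hypergrad_error_coeff :: real where
  "hypergrad_error_coeff = L + \<tau> * (M / \<mu>) + L / \<mu> * (L + \<rho> * (M / \<mu>))"

definition Phi_smoothness_coeff :: real where
  "Phi_smoothness_coeff = L / 2 * (1 + (L / \<mu>)\<^sup>2) + M / \<mu> * (1 + L / \<mu>) * (\<tau> + \<rho> * (L / \<mu>)) / 2"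

lemma implicit_remainder_bound:
  assumes w: "norm w \<le> M / \<mu>"
  shows "Jxy a (ystar g a) w \<bullet> (a' - a) + Hyy a (ystar g a) w \<bullet> (ystar g a' - ystar g a)
         \<le> M / \<mu> * (1 + L / \<mu>) * (\<tau> + \<rho> * (L / \<mu>)) / 2 * (norm (a' - a))\<^sup>2"
proof -
  define dx ds D where "dx = a' - a" and "ds = ystar g a' - ystar g a" and "D = norm (a' - a)"
  have ds: "norm ds \<le> L / \<mu> * D"
    using ystar_lipschitz[of a' a] by (simp add: ds_def D_def)
  \<comment> \<open>both endpoints are lower-level solutions, so the gradient terms vanish\<close>
  have "Jxy a (ystar g a) w \<bullet> dx + Hyy a (ystar g a) w \<bullet> ds
      \<le> norm w * norm (dx, ds) * (\<tau> * norm dx + \<rho> * norm ds) / 2"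
    using inner_gradient_second_order_remainder[OF gy_deriv Jxy_lipschitz Hyy_lipschitz,
        of a "ystar g a" w dx ds]
    by (simp add: dx_def ds_def gy_ystar)
  also have "\<dots> \<le> M / \<mu> * ((1 + L / \<mu>) * D) * ((\<tau> + \<rho> * (L / \<mu>)) * D) / 2"
  proof -
    have "norm (dx, ds) \<le> (1 + L / \<mu>) * D"
      using norm_Pair_le[of dx ds] ds by (simp add: D_def dx_def algebra_simps)
    moreover have "\<tau> * norm dx + \<rho> * norm ds \<le> (\<tau> + \<rho> * (L / \<mu>)) * D"
      using mult_left_mono[OF ds rho_nonneg] by (simp add: D_def dx_def algebra_simps)
    moreover have "0 \<le> M / \<mu> * ((1 + L / \<mu>) * D)"
      using M_nonneg mu_pos L_nonneg by (simp add: D_def)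
    ultimately show ?thesis
      using w tau_nonneg rho_nonneg M_nonneg mu_pos
      by (intro divide_right_mono mult_mono) auto
  qed
  finally show ?thesis by (simp add: dx_def ds_def D_def power2_eq_square mult_ac)
qed

lemma fx_lipschitz_snd: "norm (fx a b - fx a b') \<le> L * norm (b - b')"
  using lipschitz_on_curried_snd[OF grad_f_lipschitz, of a b b']
    dist_fst_le[of "(fx a b, fy a b)" "(fx a b', fy a b')"]
  by (simp add: dist_norm)

lemma fy_lipschitz_snd: "norm (fy a b - fy a b') \<le> L * norm (b - b')"
  using lipschitz_on_curried_snd[OF grad_f_lipschitz, of a b b']
    dist_snd_le[of "(fx a b, fy a b)" "(fx a b', fy a b')"]
  by (simp add: dist_norm)

lemma hypergrad_bias_bound:
  assumes sol: "Hyy a b w = fy a b"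
  defines "s \<equiv> ystar g a"
  shows "(fx a s - fx a b) \<bullet> (a' - a) + (Jxy a b w - Jxy a s w) \<bullet> (a' - a)
           + (fy a s - Hyy a s w) \<bullet> (ystar g a' - s)
         \<le> hypergrad_error_coeff * norm (b - s) * norm (a' - a)"
proof -
  define \<delta> D where "\<delta> = norm (b - s)" and "D = norm (a' - a)"
  have w: "norm w \<le> M / \<mu>" by (rule norm_le_of_Hyy_eq_fy[OF sol])
  have "(fx a s - fx a b) \<bullet> (a' - a) \<le> norm (fx a s - fx a b) * D"
    unfolding D_def by (rule norm_cauchy_schwarz)
  also have "\<dots> \<le> L * \<delta> * D"
    using fx_lipschitz_snd[of a s b] by (simp add: \<delta>_def D_def norm_minus_commute mult_right_mono)
  finally have fx_part: "(fx a s - fx a b) \<bullet> (a' - a) \<le> L * \<delta> * D" .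
  have "(Jxy a b w - Jxy a s w) \<bullet> (a' - a) \<le> norm ((Jxy a b - Jxy a s) w) * D"
    using norm_cauchy_schwarz[of "(Jxy a b - Jxy a s) w" "a' - a"]
    by (simp add: D_def blinfun.diff_left)
  also have "\<dots> \<le> (\<tau> * \<delta>) * (M / \<mu>) * D"
  proof -
    have "norm ((Jxy a b - Jxy a s) w) \<le> (\<tau> * \<delta>) * norm w"
      using norm_blinfun_diff_apply_le[OF Jxy_lipschitz, of a b a s w]
      by (simp add: \<delta>_def dist_Pair_Pair dist_norm)
    also have "\<dots> \<le> (\<tau> * \<delta>) * (M / \<mu>)"
      using w tau_nonneg by (intro mult_left_mono) (auto simp: \<delta>_def)
    finally show ?thesis by (rule mult_right_mono) (simp add: D_def)
  qed
  finally have J_part: "(Jxy a b w - Jxy a s w) \<bullet> (a' - a) \<le> \<tau> * (M / \<mu>) * \<delta> * D"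
    by (simp add: mult_ac)
  have "norm (fy a s - Hyy a s w) = norm ((fy a s - fy a b) + (Hyy a b - Hyy a s) w)"
    using sol by (simp add: blinfun.diff_left)
  also have "\<dots> \<le> L * \<delta> + \<rho> * \<delta> * (M / \<mu>)"
  proof (rule norm_triangle_le[OF add_mono])
    show "norm (fy a s - fy a b) \<le> L * \<delta>"
      using fy_lipschitz_snd[of a s b] by (simp add: \<delta>_def norm_minus_commute)
    have "norm ((Hyy a b - Hyy a s) w) \<le> \<rho> * \<delta> * norm w"
      using norm_blinfun_diff_apply_le[OF Hyy_lipschitz, of a b a s w]
      by (simp add: \<delta>_def dist_Pair_Pair dist_norm)
    also have "\<dots> \<le> \<rho> * \<delta> * (M / \<mu>)"
      using w rho_nonneg by (intro mult_left_mono) (auto simp: \<delta>_def)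
    finally show "norm ((Hyy a b - Hyy a s) w) \<le> \<rho> * \<delta> * (M / \<mu>)" .
  qed
  finally have "norm (fy a s - Hyy a s w) \<le> (L + \<rho> * (M / \<mu>)) * \<delta>"
    by (simp add: algebra_simps)
  moreover have "norm (ystar g a' - s) \<le> L / \<mu> * D"
    using ystar_lipschitz[of a' a] by (simp add: s_def D_def)
  ultimately have "norm (fy a s - Hyy a s w) * norm (ystar g a' - s) \<le> (L + \<rho> * (M / \<mu>)) * \<delta> * (L / \<mu> * D)"
    using L_nonneg rho_nonneg M_nonneg mu_pos by (intro mult_mono) (auto simp: \<delta>_def)
  then have H_part: "(fy a s - Hyy a s w) \<bullet> (ystar g a' - s) \<le> L / \<mu> * (L + \<rho> * (M / \<mu>)) * \<delta> * D"
    using norm_cauchy_schwarz[of "fy a s - Hyy a s w" "ystar g a' - s"] by (simp add: mult_ac)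
  show ?thesis
    using fx_part J_part H_part
    by (simp add: hypergrad_error_coeff_def \<delta>_def D_def algebra_simps)
qed

lemma Phi_increment_le:
  assumes sol: "Hyy a b w = fy a b"
  shows "Phi f g a' - Phi f g a \<le> (fx a b - Jxy a b w) \<bullet> (a' - a)
           + hypergrad_error_coeff * norm (b - ystar g a) * norm (a' - a)
           + Phi_smoothness_coeff * (norm (a' - a))\<^sup>2"
proof -
  define s s' D where "s = ystar g a" and "s' = ystar g a'" and "D = norm (a' - a)"
  have f_descent: "f a' s' - f a s \<le> fx a s \<bullet> (a' - a) + fy a s \<bullet> (s' - s)
      + L / 2 * (D\<^sup>2 + (norm (s' - s))\<^sup>2)"
    using lipschitz_gradient_upper_bound[OF has_derivative_split_gradient[OF f_deriv]
        grad_f_lipschitz, of "(a', s')" "(a, s)"]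
    by (simp add: D_def norm_Pair)
  have "norm (s' - s) \<le> L / \<mu> * D"
    using ystar_lipschitz[of a' a] by (simp add: s_def s'_def D_def)
  then have "(norm (s' - s))\<^sup>2 \<le> (L / \<mu>)\<^sup>2 * D\<^sup>2"
    by (metis norm_ge_zero power_mono power_mult_distrib)
  then have "L / 2 * (norm (s' - s))\<^sup>2 \<le> L / 2 * ((L / \<mu>)\<^sup>2 * D\<^sup>2)"
    using L_nonneg by (intro mult_left_mono) auto
  then have quadratic: "L / 2 * (D\<^sup>2 + (norm (s' - s))\<^sup>2) \<le> L / 2 * (1 + (L / \<mu>)\<^sup>2) * D\<^sup>2"
    by (simp add: distrib_left distrib_right)
  have split: "fx a s \<bullet> (a' - a) + fy a s \<bullet> (s' - s)
      = (fx a b - Jxy a b w) \<bullet> (a' - a)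
        + ((fx a s - fx a b) \<bullet> (a' - a) + (Jxy a b w - Jxy a s w) \<bullet> (a' - a)
           + (fy a s - Hyy a s w) \<bullet> (s' - s))
        + (Jxy a s w \<bullet> (a' - a) + Hyy a s w \<bullet> (s' - s))"
    by (simp add: inner_diff_left algebra_simps)
  have bias: "(fx a s - fx a b) \<bullet> (a' - a) + (Jxy a b w - Jxy a s w) \<bullet> (a' - a)
           + (fy a s - Hyy a s w) \<bullet> (s' - s)
      \<le> hypergrad_error_coeff * norm (b - s) * D"
    unfolding s_def s'_def D_def by (rule hypergrad_bias_bound[OF sol])
  have implicit: "Jxy a s w \<bullet> (a' - a) + Hyy a s w \<bullet> (s' - s)
      \<le> M / \<mu> * (1 + L / \<mu>) * (\<tau> + \<rho> * (L / \<mu>)) / 2 * D\<^sup>2"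
    unfolding s_def s'_def D_def
    by (rule implicit_remainder_bound[OF norm_le_of_Hyy_eq_fy[OF sol]])
  have "Phi_smoothness_coeff * D\<^sup>2
      = L / 2 * (1 + (L / \<mu>)\<^sup>2) * D\<^sup>2 + M / \<mu> * (1 + L / \<mu>) * (\<tau> + \<rho> * (L / \<mu>)) / 2 * D\<^sup>2"
    by (simp add: Phi_smoothness_coeff_def algebra_simps)
  then show ?thesis
    unfolding Phi_def s_def[symmetric] s'_def[symmetric] D_def[symmetric]
    using f_descent quadratic split bias implicit by linarith
qed

lemma LPhi_expand:
  "L + (2 * L\<^sup>2 + \<tau> * M\<^sup>2) / \<mu> + (\<rho> * L * M + L ^ 3 + \<tau> * M * L) / \<mu>\<^sup>2 + \<rho> * L\<^sup>2 * M / \<mu> ^ 3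
   = L + 2 * L * (L / \<mu>) + \<tau> * M * (M / \<mu>) + \<rho> * (M / \<mu>) * (L / \<mu>) + L * (L / \<mu>)\<^sup>2
     + \<tau> * (M / \<mu>) * (L / \<mu>) + \<rho> * (M / \<mu>) * (L / \<mu>)\<^sup>2"
  using mu_pos by (simp add: field_simps power2_eq_square power3_eq_cube)

lemma Gamma_lower_bound:
  assumes "\<mu> \<le> L"
  shows "3 * L\<^sup>2 + 3 * (\<tau> * (M / \<mu>))\<^sup>2 + 24 * (L / \<mu> * (L + \<rho> * (M / \<mu>)))\<^sup>2
    \<le> 3 * L\<^sup>2 + 3 * \<tau>\<^sup>2 * M\<^sup>2 / \<mu>\<^sup>2 + 6 * L\<^sup>2 * (1 + sqrt (L / \<mu>))\<^sup>2 * (L / \<mu> + \<rho> * M / \<mu>\<^sup>2)\<^sup>2"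
proof -
  define c where "c = L / \<mu> * (L + \<rho> * (M / \<mu>))"
  have "1 \<le> sqrt (L / \<mu>)" using assms mu_pos by simp
  then have "2\<^sup>2 \<le> (1 + sqrt (L / \<mu>))\<^sup>2" by (intro power_mono) auto
  then have "6 * 4 * c\<^sup>2 \<le> 6 * (1 + sqrt (L / \<mu>))\<^sup>2 * c\<^sup>2"
    by (intro mult_right_mono) auto
  moreover have "L * (L / \<mu> + \<rho> * M / \<mu>\<^sup>2) = c"
    using mu_pos by (simp add: c_def field_simps power2_eq_square)
  then have "L\<^sup>2 * (L / \<mu> + \<rho> * M / \<mu>\<^sup>2)\<^sup>2 = c\<^sup>2"
    by (simp only: power_mult_distrib[symmetric])
  then have "6 * L\<^sup>2 * (1 + sqrt (L / \<mu>))\<^sup>2 * (L / \<mu> + \<rho> * M / \<mu>\<^sup>2)\<^sup>2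
      = 6 * (1 + sqrt (L / \<mu>))\<^sup>2 * c\<^sup>2"
    by (simp add: algebra_simps)
  moreover have "\<tau>\<^sup>2 * M\<^sup>2 / \<mu>\<^sup>2 = (\<tau> * (M / \<mu>))\<^sup>2"
    by (simp add: power_mult_distrib power_divide)
  ultimately show ?thesis
    unfolding c_def[symmetric] by linarith
qed

lemma hypergrad_error_coeff_sq_le:
  assumes "\<mu> \<le> L"
  shows "hypergrad_error_coeff\<^sup>2 \<le> 2 * (\<tau> * (M / \<mu>))\<^sup>2 + 8 * (L / \<mu> * (L + \<rho> * (M / \<mu>)))\<^sup>2"
proof -
  define c where "c = L / \<mu> * (L + \<rho> * (M / \<mu>))"
  have "L \<le> c"
  proof -
    have "L \<le> L / \<mu> * L" using assms mu_pos L_nonneg by (simp add: field_simps mult_right_mono)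
    moreover have "0 \<le> L / \<mu> * (\<rho> * (M / \<mu>))"
      using L_nonneg mu_pos rho_nonneg M_nonneg by simp
    ultimately show ?thesis by (simp add: c_def distrib_left)
  qed
  have "hypergrad_error_coeff\<^sup>2 = (\<tau> * (M / \<mu>) + (L + c))\<^sup>2"
    by (simp add: hypergrad_error_coeff_def c_def algebra_simps)
  also have "\<dots> \<le> 2 * (\<tau> * (M / \<mu>))\<^sup>2 + 2 * (L + c)\<^sup>2"
    by (rule power2_sum_le)
  also have "(L + c)\<^sup>2 \<le> (2 * c)\<^sup>2"
    using \<open>L \<le> c\<close> L_nonneg by (intro power_mono) auto
  finally show ?thesis
    unfolding c_def[symmetric] by (simp add: power_mult_distrib)
qed

lemma coefficient_budget:
  assumes "\<mu> < L"
  shows "hypergrad_error_coeff\<^sup>2 + 2 * Phi_smoothness_coeff + (L / \<mu>)\<^sup>2 / 2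
    \<le> (L + (2 * L\<^sup>2 + \<tau> * M\<^sup>2) / \<mu> + (\<rho> * L * M + L ^ 3 + \<tau> * M * L) / \<mu>\<^sup>2
        + \<rho> * L\<^sup>2 * M / \<mu> ^ 3)
      + (3 * L\<^sup>2 + 3 * \<tau>\<^sup>2 * M\<^sup>2 / \<mu>\<^sup>2 + 6 * L\<^sup>2 * (1 + sqrt (L / \<mu>))\<^sup>2 * (L / \<mu> + \<rho> * M / \<mu>\<^sup>2)\<^sup>2)
      + (L / \<mu>)\<^sup>2"
proof -
  define k m where "k = L / \<mu>" and "m = M / \<mu>"
  have k: "1 < k" using assms mu_pos by (simp add: k_def)
  have m: "0 \<le> m" using M_nonneg mu_pos by (simp add: m_def)
  \<comment> \<open>the term \<open>m \<tau>\<close> of the smoothness coefficient is covered by \<open>(\<tau> m)\<^sup>2 + k\<^sup>2/2\<close>\<close>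
  have "m * \<tau> \<le> (\<tau> * m)\<^sup>2 + k\<^sup>2 / 2"
  proof -
    have "(\<tau> * m - 1 / 2)\<^sup>2 = (\<tau> * m)\<^sup>2 - m * \<tau> + 1 / 4"
      by (simp add: power2_eq_square algebra_simps)
    then have "m * \<tau> \<le> (\<tau> * m)\<^sup>2 + 1 / 4"
      using zero_le_power2[of "\<tau> * m - 1 / 2"] by linarith
    moreover have "1 \<le> k\<^sup>2" using k by (simp add: one_le_power)
    ultimately show ?thesis by simp
  qed
  moreover have "2 * Phi_smoothness_coeff
      = L + L * k\<^sup>2 + m * \<tau> + \<tau> * m * k + \<rho> * m * k + \<rho> * m * k\<^sup>2"
    using mu_pos by (simp add: Phi_smoothness_coeff_def k_def m_def field_simps power2_eq_square)
  moreover have "0 \<le> \<tau> * M * m" "0 \<le> 2 * L * k" "0 \<le> L\<^sup>2" "0 \<le> (k * (L + \<rho> * m))\<^sup>2"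
    using tau_nonneg M_nonneg m L_nonneg k by auto
  ultimately show ?thesis
    using hypergrad_error_coeff_sq_le Gamma_lower_bound LPhi_expand assms
    unfolding k_def[symmetric] m_def[symmetric] by linarith
qed

lemma stepsize_condition:
  assumes "\<mu> < L" and "0 < \<beta>"
    and beta_le: "\<beta> \<le> 1 / 2 * inverse
      ((L + (2 * L\<^sup>2 + \<tau> * M\<^sup>2) / \<mu> + (\<rho> * L * M + L ^ 3 + \<tau> * M * L) / \<mu>\<^sup>2 + \<rho> * L\<^sup>2 * M / \<mu> ^ 3)
       + (3 * L\<^sup>2 + 3 * \<tau>\<^sup>2 * M\<^sup>2 / \<mu>\<^sup>2 + 6 * L\<^sup>2 * (1 + sqrt (L / \<mu>))\<^sup>2 * (L / \<mu> + \<rho> * M / \<mu>\<^sup>2)\<^sup>2)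
       + (L / \<mu>)\<^sup>2)"
  shows "hypergrad_error_coeff\<^sup>2 / 2 + Phi_smoothness_coeff + (L / \<mu>)\<^sup>2 / 4 \<le> 1 / (4 * \<beta>)"
proof -
  define S where "S = (L + (2 * L\<^sup>2 + \<tau> * M\<^sup>2) / \<mu> + (\<rho> * L * M + L ^ 3 + \<tau> * M * L) / \<mu>\<^sup>2
      + \<rho> * L\<^sup>2 * M / \<mu> ^ 3)
    + (3 * L\<^sup>2 + 3 * \<tau>\<^sup>2 * M\<^sup>2 / \<mu>\<^sup>2 + 6 * L\<^sup>2 * (1 + sqrt (L / \<mu>))\<^sup>2 * (L / \<mu> + \<rho> * M / \<mu>\<^sup>2)\<^sup>2)
    + (L / \<mu>)\<^sup>2"
  have budget: "hypergrad_error_coeff\<^sup>2 + 2 * Phi_smoothness_coeff + (L / \<mu>)\<^sup>2 / 2 \<le> S"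
    unfolding S_def by (rule coefficient_budget[OF assms(1)])
  have "0 \<le> Phi_smoothness_coeff"
    using L_nonneg M_nonneg mu_pos tau_nonneg rho_nonneg by (simp add: Phi_smoothness_coeff_def)
  moreover have "0 < (L / \<mu>)\<^sup>2 / 2" using assms(1) mu_pos by simp
  ultimately have "0 < S"
    using budget zero_le_power2[of hypergrad_error_coeff] by linarith
  moreover have "\<beta> \<le> 1 / 2 * inverse S"
    using beta_le unfolding S_def .
  ultimately have "S / 2 \<le> 1 / (4 * \<beta>)"
    using \<open>0 < \<beta>\<close> by (simp add: field_simps)
  with budget show ?thesis by simp
qed

lemma potential_decrease:
  fixes h :: "'a \<Rightarrow> ereal"
  assumes "\<mu> < L" and "0 < \<beta>"
    and stepsize: "hypergrad_error_coeff\<^sup>2 / 2 + Phi_smoothness_coeff + (L / \<mu>)\<^sup>2 / 4 \<le> 1 / (4 * \<beta>)"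
    and contraction: "(1 + L / \<mu>) * (1 - 1 / sqrt (L / \<mu>)) ^ T \<le> 1 / 8"
    and proper: "\<forall>a. h a \<noteq> -\<infinity>"
    and sol: "Hyy a b w = fy a b"
    and prox_step: "a' \<in> prox \<beta> h (a - \<beta> *\<^sub>R (fx a b - Jxy a b w))"
  shows "ereal (Phi f g a') + h a' + ereal (7 / 8 * (norm (agd T a' b - ystar g a'))\<^sup>2)
    \<le> ereal (Phi f g a) + h a + ereal (7 / 8 * (norm (b - ystar g a))\<^sup>2)
       - ereal (1 / (4 * \<beta>) * (norm (a' - a))\<^sup>2)
       - ereal (1 / 8 * ((norm (b - ystar g a))\<^sup>2 + (norm (agd T a' b - ystar g a'))\<^sup>2))"
proof -
  define G \<delta> e D where "G = fx a b - Jxy a b w" and "\<delta> = norm (b - ystar g a)"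
    and "e = (norm (agd T a' b - ystar g a'))\<^sup>2" and "D = norm (a' - a)"
  have Phi: "Phi f g a' - Phi f g a
      \<le> G \<bullet> (a' - a) + hypergrad_error_coeff * \<delta> * D + Phi_smoothness_coeff * D\<^sup>2"
    unfolding G_def \<delta>_def D_def by (rule Phi_increment_le[OF sol])
  have warm: "e \<le> \<delta>\<^sup>2 / 4 + (L / \<mu>)\<^sup>2 / 4 * D\<^sup>2"
    using agd_warm_start[OF \<open>\<mu> < L\<close> contraction, of a' b a] by (simp add: e_def \<delta>_def D_def)
  have young: "hypergrad_error_coeff * \<delta> * D \<le> \<delta>\<^sup>2 / 2 + hypergrad_error_coeff\<^sup>2 / 2 * D\<^sup>2"
    using sum_squares_bound[of \<delta> "hypergrad_error_coeff * D"] by (simp add: power_mult_distrib mult_ac)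
  define Q where "Q = 1 / (4 * \<beta>) * D\<^sup>2"
  have budget: "hypergrad_error_coeff\<^sup>2 / 2 * D\<^sup>2 + Phi_smoothness_coeff * D\<^sup>2 + (L / \<mu>)\<^sup>2 / 4 * D\<^sup>2 \<le> Q"
    using mult_right_mono[OF stepsize zero_le_power2[of D]] unfolding distrib_right Q_def .
  have descent: "Phi f g a' + e \<le> Phi f g a + 3 / 4 * \<delta>\<^sup>2 + Q + G \<bullet> (a' - a)"
    using Phi warm young budget by linarith
  have prox: "h a' + ereal (G \<bullet> (a' - a) + 2 * Q) \<le> h a"
    using prox_sufficient_decrease[OF \<open>0 < \<beta>\<close> prox_step] proper
    by (simp add: G_def Q_def D_def)
  show ?thesis
  proof (cases "h a")
    case (real r)
    with prox obtain r' where r': "h a' = ereal r'"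
      using proper by (cases "h a'") auto
    with prox real have "r' + (G \<bullet> (a' - a) + 2 * Q) \<le> r" by simp
    with descent have "Phi f g a' + r' + 7 / 8 * e
        \<le> Phi f g a + r + 7 / 8 * \<delta>\<^sup>2 - Q - 1 / 8 * (\<delta>\<^sup>2 + e)"
      by (simp add: field_simps)
    then show ?thesis
      by (simp add: real r' \<delta>_def e_def D_def Q_def)
  qed (use proper in auto)
qed

end

theorem proposition1:
  fixes f g :: "'a::euclidean_space \<Rightarrow> 'b::euclidean_space \<Rightarrow> real"
    and fx :: "'a \<Rightarrow> 'b \<Rightarrow> 'a" and fy :: "'a \<Rightarrow> 'b \<Rightarrow> 'b"
    and gx :: "'a \<Rightarrow> 'b \<Rightarrow> 'a" and gy :: "'a \<Rightarrow> 'b \<Rightarrow> 'b"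
    and Jxy :: "'a \<Rightarrow> 'b \<Rightarrow> ('b \<Rightarrow>\<^sub>L 'a)"
    and Hyy :: "'a \<Rightarrow> 'b \<Rightarrow> ('b \<Rightarrow>\<^sub>L 'b)"
    and h :: "'a \<Rightarrow> ereal"
    and \<mu> L M \<tau> \<rho> \<alpha> \<beta> \<eta> :: real and T :: nat
    and x :: "nat \<Rightarrow> 'a" and y :: "nat \<Rightarrow> 'b" and v :: "nat \<Rightarrow> 'b"
  defines "\<kappa> \<equiv> L / \<mu>"
    and "L\<^sub>\<Phi> \<equiv> L + (2 * L\<^sup>2 + \<tau> * M\<^sup>2) / \<mu> + (\<rho> * L * M + L ^ 3 + \<tau> * M * L) / \<mu>\<^sup>2
                 + \<rho> * L\<^sup>2 * M / \<mu> ^ 3"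
    and "\<Gamma> \<equiv> 3 * L\<^sup>2 + 3 * \<tau>\<^sup>2 * M\<^sup>2 / \<mu>\<^sup>2
              + 6 * L\<^sup>2 * (1 + sqrt (L / \<mu>))\<^sup>2 * (L / \<mu> + \<rho> * M / \<mu>\<^sup>2)\<^sup>2"
    and "H \<equiv> (\<lambda>x' y'. ereal (Phi f g x') + h x'
                 + ereal (7 / 8 * (norm (yT gy \<alpha> \<eta> T x' y' - ystar g x'))\<^sup>2))"
  assumes f_deriv: "\<And>a b. ((\<lambda>z. f (fst z) (snd z)) has_derivative
                 (\<lambda>(u, w). fx a b \<bullet> u + fy a b \<bullet> w)) (at (a, b))"
    and g_deriv: "\<And>a b. ((\<lambda>z. g (fst z) (snd z)) has_derivative
                 (\<lambda>(u, w). gx a b \<bullet> u + gy a b \<bullet> w)) (at (a, b))"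
    \<comment> \<open>Jacobian nabla_x nabla_y g and Hessian nabla_y^2 g:
        the gradient of z \<mapsto> nabla_y g(z) . w is (Jxy z w, Hyy z w)\<close>
    and gy_deriv: "\<And>a b w. ((\<lambda>z. gy (fst z) (snd z) \<bullet> w) has_derivative
                 (\<lambda>(u, u'). Jxy a b w \<bullet> u + Hyy a b w \<bullet> u')) (at (a, b))"
    and cont_f: "continuous_on UNIV (\<lambda>z. (fx (fst z) (snd z), fy (fst z) (snd z)))"
    and cont_g: "continuous_on UNIV (\<lambda>z. (gx (fst z) (snd z), gy (fst z) (snd z)))"
    and mu_pos: "\<mu> > 0"
    and A1_1: "\<And>a. strongly_convex \<mu> (g a)"
    and A1_2_proper: "\<forall>a. h a \<noteq> -\<infinity>" "\<exists>a. h a \<noteq> \<infinity>"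
    and A1_2_lsc: "lower_semicontinuous h"
    and A1_3_bdd_below: "\<exists>c::real. \<forall>a. ereal c \<le> ereal (Phi f g a) + h a"
    and A1_3_sublevel: "\<And>c::real. bounded {a. ereal (Phi f g a) + h a \<le> ereal c}"
    and A2_f: "M-lipschitz_on UNIV (\<lambda>z. f (fst z) (snd z))"
    and A2_grad_f: "L-lipschitz_on UNIV (\<lambda>z. (fx (fst z) (snd z), fy (fst z) (snd z)))"
    and A2_grad_g: "L-lipschitz_on UNIV (\<lambda>z. (gx (fst z) (snd z), gy (fst z) (snd z)))"
    and A2_Jxy: "\<tau>-lipschitz_on UNIV (\<lambda>z. Jxy (fst z) (snd z))"
    and A2_Hyy: "\<rho>-lipschitz_on UNIV (\<lambda>z. Hyy (fst z) (snd z))"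
    and kappa_gt: "\<kappa> > 1"
    and alpha_def: "\<alpha> = 1 / L"
    and eta_def: "\<eta> = (sqrt \<kappa> - 1) / (sqrt \<kappa> + 1)"
    and beta_pos: "0 < \<beta>"
    and beta_le: "\<beta> \<le> 1 / 2 * inverse (L\<^sub>\<Phi> + \<Gamma> + \<kappa>\<^sup>2)"
    and T_ge: "real T \<ge> ln (8 * (1 + \<kappa>)) / ln (inverse (1 - 1 / sqrt \<kappa>))"
    and y_step: "\<And>k. y (Suc k) = yT gy \<alpha> \<eta> T (x k) (y k)"
    and v_sol: "\<And>k. Hyy (x k) (y (Suc k)) (v k) = fy (x k) (y (Suc k))"
    and x_step: "\<And>k. x (Suc k) \<in> prox \<beta> h
                  (x k - \<beta> *\<^sub>R (fx (x k) (y (Suc k)) - Jxy (x k) (y (Suc k)) (v k)))"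
  shows "\<And>k. H (x (Suc k)) (y (Suc k)) \<le> H (x k) (y k)
           - ereal (1 / (4 * \<beta>) * (norm (x (Suc k) - x k))\<^sup>2)
           - ereal (1 / 8 * ((norm (y (Suc k) - ystar g (x k)))\<^sup>2
                             + (norm (y (Suc (Suc k)) - ystar g (x (Suc k))))\<^sup>2))"
proof -
  interpret bilevel g gx gy \<mu> L f fx fy Jxy Hyy M \<tau> \<rho>
    by unfold_locales (fact g_deriv A2_grad_g mu_pos A1_1 f_deriv gy_deriv A2_f A2_grad_f
        A2_Jxy A2_Hyy)+
  have "\<mu> < L"
    using kappa_gt mu_pos by (simp add: \<kappa>_def field_simps)
  have stepsize: "hypergrad_error_coeff\<^sup>2 / 2 + Phi_smoothness_coeff + (L / \<mu>)\<^sup>2 / 4 \<le> 1 / (4 * \<beta>)"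
    using stepsize_condition[OF \<open>\<mu> < L\<close> beta_pos] beta_le
    by (simp add: \<kappa>_def L\<^sub>\<Phi>_def \<Gamma>_def)
  have "8 * (1 + \<kappa>) * (1 - 1 / sqrt \<kappa>) ^ T \<le> 1"
    using kappa_gt T_ge by (intro power_le_inverse_of_log_bound) auto
  then have "(1 + \<kappa>) * (1 - 1 / sqrt \<kappa>) ^ T \<le> 1 / 8"
    unfolding mult.assoc by linarith
  then have contraction: "(1 + L / \<mu>) * (1 - 1 / sqrt (L / \<mu>)) ^ T \<le> 1 / 8"
    by (simp only: \<kappa>_def)
  have yT_agd: "yT gy \<alpha> \<eta> T = agd T"
    by (simp add: agd_def alpha_def eta_def \<kappa>_def)
  fix k
  show "?thesis k"
    using potential_decrease[OF \<open>\<mu> < L\<close> beta_pos stepsize contraction A1_2_proper(1) v_sol x_step]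
    unfolding H_def y_step yT_agd Phi_def .
qed

end
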